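(* Let $A\in\mathbb{R}^{n\times n}$ and $B\in\mathbb{R}^{n\times m}$ with $\rho(|A|)<1$, and let $T$ be a positive integer. Let $i,j\in\{1,\dots,n\}$, $i\neq j$, and $w\in\mathbb{R}$ be such that $\rho(|A|+|w|e_je_i^{\top})<1$. Then $$\log\det(\mathcal{W}_A)\le\sigma n\log\Big(\frac{\operatorname{tr}(\mathcal{W}_A)}{n^{1/\sigma}}\Big)\le\sigma n\log\Big(\frac{\operatorname{tr}(\mathcal{H}_{\mathcal{X}})}{n^{1/\sigma}}\Big),$$ with $\sigma=1$ if $\operatorname{tr}(\mathcal{W}_A)\le1$ and $\sigma=2$ if $\operatorname{tr}(\mathcal{W}_A)>1$; and, with $\tau=(1+\alpha\beta)\operatorname{tr}(\mathcal{H}_{\mathcal{X}})+\alpha^2\gamma\bar\gamma$, $$\log\det(\mathcal{W}_{A+we_je_i^{\top}})\le\sigma n\log\Big(\frac{\tau}{n^{1/\sigma}}\Big),$$ with $\sigma=1$ if $\tau\le1$ and $\sigma=2$ if $\tau>1$.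
   Context: $|\cdot|$ is taken entrywise; $\rho$ is the spectral radius; $e_k$ is the $k$-th canonical unit vector; $\|\cdot\|$ is the Euclidean norm. For $Z\in\mathbb{R}^{n\times n}$, $\mathcal{W}_Z=\sum_{t=0}^{T-1}Z^tBB^{\top}(Z^t)^{\top}$ (the paper assumes controllability, so Gramians are positive definite). Define $\mathcal{X}=(I-|A|)^{-1}$, $\mathcal{H}_{\mathcal{X}}=\mathcal{X}|B||B|^{\top}\mathcal{X}^{\top}$, $\alpha_{pq}=\frac{|w|}{1-|w|e_p^{\top}\mathcal{X}e_q}$, $\alpha=\max_{p\neq q}\alpha_{pq}$, $\beta=\max\{\max_{p\neq q}2e_p^{\top}\mathcal{X}e_q,\ \max_{p\neq q}e_p^{\top}\mathcal{X}e_q+\max_{q}\|\mathcal{X}e_q\|\}$, $\gamma=\max_k e_k^{\top}\mathcal{X}^{\top}\mathcal{X}e_k$, $\bar\gamma=\max_k e_k^{\top}\mathcal{X}|B||B|^{\top}\mathcal{X}^{\top}e_k$. *)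

theory Defs
  imports "HOL-Analysis.Analysis"
begin

primrec mpow :: "real^'n^'n \<Rightarrow> nat \<Rightarrow> real^'n^'n" where
  "mpow Z 0 = mat 1"
| "mpow Z (Suc t) = Z ** mpow Z t"

definition mabs :: "real^'c^'r \<Rightarrow> real^'c^'r" where
  "mabs M = (\<chi> r c. \<bar>M $ r $ c\<bar>)"

definition cmat :: "real^'n^'n \<Rightarrow> complex^'n^'n" where
  "cmat M = (\<chi> r c. complex_of_real (M $ r $ c))"

definition eigenvalues :: "real^'n^'n \<Rightarrow> complex set" where
  "eigenvalues M = {e. \<exists>v. v \<noteq> 0 \<and> cmat M *v v = e *s v}"

definition spectral_radius :: "real^'n^'n \<Rightarrow> real" where
  "spectral_radius M = Sup (cmod ` eigenvalues M)"

definition unitv :: "'n \<Rightarrow> real^'n" where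
  "unitv k = (\<chi> r. if r = k then 1 else 0)"

definition Eji :: "'n \<Rightarrow> 'n \<Rightarrow> real^'n^'n" where
  "Eji j i = (\<chi> r c. if r = j \<and> c = i then 1 else 0)"

definition gramian :: "nat \<Rightarrow> real^'n^'n \<Rightarrow> real^'m^'n \<Rightarrow> real^'n^'n" where
  "gramian T Z B = (\<Sum>t<T. mpow Z t ** B ** transpose B ** transpose (mpow Z t))"

(* Controllability of (Z,B) over horizon T: the columns of B, ZB, ..., Z^(T-1)B span R^n
   (i.e. the controllability matrix has full row rank n) *)
definition controllable :: "nat \<Rightarrow> real^'n^'n \<Rightarrow> real^'m^'n \<Rightarrow> bool" where
  "controllable T Z B \<longleftrightarrow> span {column k (mpow Z t ** B) | t k. t < T} = UNIV"

definition Xmat :: "real^'n^'n \<Rightarrow> real^'n^'n" where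
  "Xmat A = matrix_inv (mat 1 - mabs A)"

definition Hmat :: "real^'n^'n \<Rightarrow> real^'m^'n \<Rightarrow> real^'n^'n" where
  "Hmat A B = Xmat A ** mabs B ** transpose (mabs B) ** transpose (Xmat A)"

definition alpha_pq :: "real^'n^'n \<Rightarrow> real \<Rightarrow> 'n \<Rightarrow> 'n \<Rightarrow> real" where
  "alpha_pq A w p q = \<bar>w\<bar> / (1 - \<bar>w\<bar> * (unitv p \<bullet> (Xmat A *v unitv q)))"

definition alpha :: "real^'n^'n \<Rightarrow> real \<Rightarrow> real" where
  "alpha A w = Max {alpha_pq A w p q | p q. p \<noteq> q}"

definition beta :: "real^'n^'n \<Rightarrow> real" where
  "beta A = max (Max {2 * (unitv p \<bullet> (Xmat A *v unitv q)) | p q. p \<noteq> q})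
                (Max {unitv p \<bullet> (Xmat A *v unitv q) | p q. p \<noteq> q}
                 + Max {norm (Xmat A *v unitv q) | q. True})"

definition gamma :: "real^'n^'n \<Rightarrow> real" where
  "gamma A = Max {unitv k \<bullet> ((transpose (Xmat A) ** Xmat A) *v unitv k) | k. True}"

definition gamma_bar :: "real^'n^'n \<Rightarrow> real^'m^'n \<Rightarrow> real" where
  "gamma_bar A B = Max {unitv k \<bullet> (Hmat A B *v unitv k) | k. True}"

definition sigma :: "real \<Rightarrow> real" where
  "sigma x = (if x \<le> 1 then 1 else 2)"

end

(* Under controllability the Gramian W_Z is symmetric positive definite, so the AM-GM
   inequality for its eigenvalues gives log det W_Z <= n log(tr W_Z / n), which is then weakened
   to the sigma-form.  The entries of Z^t B are dominated by those of |Z|^t |B|, and because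
   rho(|Z|) < 1 the matrix (I - |Z|)^-1 is entrywise nonnegative and dominates every partial
   Neumann sum; hence tr W_Z <= tr(Y |B| |B|^T Y^T) with Y = (I - |Z|)^-1.  For Z = A this is
   tr H_X.  For Z = A + w e_j e_i^T one has |Z| <= P = |A| + |w| e_j e_i^T, and the
   Sherman-Morrison formula gives (I - P)^-1 = X + alpha_ij X e_j e_i^T X; expanding
   tr(Y |B| |B|^T Y^T) column by column and bounding the cross terms by Cauchy-Schwarz
   gives the bound tau. *)

theory Submission
  imports Defs
begin

lemma matrix_mul_entry: "((A::real^'n^'m) ** B) $ i $ j = (\<Sum>k\<in>UNIV. A$i$k * B$k$j)"
  by (simp add: matrix_matrix_mult_def)

lemma matrix_mul_diff_ldistrib: "(A::real^'n^'m) ** (B - C) = A ** B - A ** C"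
  by (simp add: matrix_matrix_mult_def vec_eq_iff sum_subtractf algebra_simps)

lemma matrix_mul_diff_rdistrib: "((B::real^'n^'m) - C) ** A = B ** A - C ** A"
  by (simp add: matrix_matrix_mult_def vec_eq_iff sum_subtractf algebra_simps)

lemma matrix_mul_add_rdistrib: "((B::real^'n^'m) + C) ** A = B ** A + C ** A"
  by (simp add: matrix_matrix_mult_def vec_eq_iff sum.distrib algebra_simps)

lemma matrix_mul_scaleR_left: "(k *\<^sub>R (A::real^'n^'m)) ** B = k *\<^sub>R (A ** B)"
  by (simp add: matrix_matrix_mult_def vec_eq_iff sum_distrib_left algebra_simps)

lemma matrix_mul_scaleR_right: "(A::real^'n^'m) ** (k *\<^sub>R B) = k *\<^sub>R (A ** B)"
  by (simp add: matrix_matrix_mult_def vec_eq_iff sum_distrib_left algebra_simps)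

lemma matrix_vector_mult_sum_left:
  "(\<Sum>t\<in>S. (A t :: real^'n^'m)) *v x = (\<Sum>t\<in>S. A t *v x)"
proof -
  have "((\<Sum>t\<in>S. A t) *v x) $ r = (\<Sum>t\<in>S. A t *v x) $ r" for r
    by (simp add: matrix_vector_mult_def sum_component sum_distrib_right) (rule sum.swap)
  then show ?thesis by (simp add: vec_eq_iff)
qed

lemma matrix_mul_matrix_inv:
  fixes M :: "real^'n^'n"
  assumes "invertible M"
  shows "M ** matrix_inv M = mat 1" "matrix_inv M ** M = mat 1"
  using someI_ex[OF assms[unfolded invertible_def]] unfolding matrix_inv_def by auto

lemma matrix_inv_unique:
  fixes M Z :: "real^'n^'n"
  assumes "M ** Z = mat 1"
  shows "matrix_inv M = Z"
proof -
  have "invertible M" using assms invertible_right_inverse by blast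
  have "matrix_inv M = (matrix_inv M ** M) ** Z"
    using assms by (simp flip: matrix_mul_assoc)
  also have "\<dots> = Z" using matrix_mul_matrix_inv(2)[OF \<open>invertible M\<close>] by simp
  finally show ?thesis .
qed

lemma matrix_inv_entry_cramer:
  fixes M :: "real^'n^'n"
  assumes "invertible M"
  shows "matrix_inv M $ r $ c
           = det (\<chi> i k. if k = r then (if i = c then 1 else 0) else M$i$k) / det M"
proof -
  have "M *v column c (matrix_inv M) = column c (M ** matrix_inv M)"
    by (simp add: vec_eq_iff column_def matrix_vector_mult_def matrix_mul_entry)
  also have "\<dots> = (\<chi> i. if i = c then 1 else 0)"
    using matrix_mul_matrix_inv(1)[OF assms] by (simp add: vec_eq_iff column_def mat_def)
  finally have e: "M *v column c (matrix_inv M) = (\<chi> i. if i = c then 1 else 0)" .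
  have "det (\<chi> i k. if k = r then (M *v column c (matrix_inv M))$i else M$i$k)
      = column c (matrix_inv M) $ r * det M"
    by (rule cramer_lemma)
  then have "det (\<chi> i k. if k = r then (if i = c then 1 else 0) else M$i$k)
      = matrix_inv M $ r $ c * det M"
    unfolding e by (simp add: column_def cong: if_cong)
  moreover have "det M \<noteq> 0" using assms invertible_det_nz by blast
  ultimately show ?thesis by simp
qed

lemma unitv_inner: "unitv p \<bullet> (v::real^'n) = v$p"
proof -
  have "unitv p \<bullet> v = (\<Sum>i\<in>UNIV. if i = p then v$i else 0)"
    unfolding unitv_def inner_vec_def by (rule sum.cong) auto
  then show ?thesis by simp
qed

lemma matrix_vector_mult_unitv: "(M::real^'n^'m) *v unitv q = column q M"
  by (simp add: unitv_def matrix_vector_mult_def column_def vec_eq_iff if_distrib cong: if_cong)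

lemma unitv_inner_matrix_vector_mult_unitv: "unitv p \<bullet> ((M::real^'n^'n) *v unitv q) = M$p$q"
  by (simp add: unitv_inner matrix_vector_mult_unitv column_def)

lemma norm_unitv: "norm (unitv p :: real^'n) = 1"
  by (simp add: norm_eq_1 unitv_inner) (simp add: unitv_def)

lemma Eji_mult_entry: "(Eji j i ** (M::real^'k^'n)) $ a $ b = (if a = j then M $ i $ b else 0)"
  by (simp add: matrix_mul_entry Eji_def if_distrib if_distribR cong: if_cong)

lemma matrix_mul_Eji_mult_entry: "((X::real^'n^'m) ** (Eji j i ** M)) $ r $ k = X$r$j * M$i$k"
proof -
  have "(\<Sum>l\<in>UNIV. X$r$l * (if l = j then M$i$k else 0))
      = (\<Sum>l\<in>UNIV. if l = j then X$r$j * M$i$k else 0)"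
    by (rule sum.cong) auto
  then show ?thesis by (simp add: matrix_mul_entry[of X] Eji_mult_entry)
qed

lemma Eji_mult_Eji: "Eji j i ** (M::real^'n^'n) ** Eji j i = M$i$j *\<^sub>R Eji j i"
proof -
  have "(Eji j i ** M ** Eji j i)$a$b
      = (\<Sum>k\<in>UNIV. if k = j then (if a = j \<and> b = i then M$i$k else 0) else 0)" for a b
    unfolding matrix_mul_entry[of "Eji j i ** M"] Eji_mult_entry by (rule sum.cong) (auto simp: Eji_def)
  then show ?thesis by (simp add: vec_eq_iff Eji_def)
qed

lemma trace_sum: "trace (\<Sum>t\<in>S. (f t :: real^'n^'n)) = (\<Sum>t\<in>S. trace (f t))"
  unfolding trace_def sum_component by (rule sum.swap)

lemma trace_mult_transpose:
  "trace ((M::real^'k^'n) ** transpose M) = (\<Sum>r\<in>UNIV. \<Sum>c\<in>UNIV. (M$r$c)\<^sup>2)"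
  by (simp add: trace_def matrix_mul_entry transpose_def power2_eq_square)

lemma trace_mult_transpose_columns:
  "trace ((M::real^'k^'n) ** transpose M) = (\<Sum>c\<in>UNIV. column c M \<bullet> column c M)"
  unfolding trace_mult_transpose by (subst sum.swap) (simp add: inner_vec_def column_def power2_eq_square)

lemma inner_mult_transpose_self:
  "x \<bullet> (((M::real^'k^'n) ** transpose M) *v x) = (norm (transpose M *v x))\<^sup>2"
proof -
  have "x \<bullet> ((M ** transpose M) *v x) = (x v* M) \<bullet> (transpose M *v x)"
    by (simp add: dot_lmul_matrix flip: matrix_vector_mul_assoc)
  then show ?thesis by (simp add: power2_norm_eq_inner)
qed

lemma symmetric_matrix_inner_commute:
  fixes W :: "real^'n^'n"
  assumes "transpose W = W"
  shows "x \<bullet> (W *v y) = (W *v x) \<bullet> y"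
  by (metis assms dot_lmul_matrix transpose_matrix_vector)

section \<open>Spectral radius and nonnegative inverses\<close>

lemma eigenvalue_norm_le_entry_sum:
  fixes M :: "real^'n^'n"
  assumes "e \<in> eigenvalues M"
  shows "cmod e \<le> (\<Sum>r\<in>UNIV. \<Sum>c\<in>UNIV. \<bar>M$r$c\<bar>)"
proof -
  obtain v where v: "v \<noteq> 0" "cmat M *v v = e *s v"
    using assms unfolding eigenvalues_def by auto
  define m where "m = Max (range (\<lambda>c. cmod (v$c)))"
  have "m \<in> range (\<lambda>c. cmod (v$c))" unfolding m_def by (rule Max_in) auto
  then obtain k where "m = cmod (v$k)" by blast
  then have k: "cmod (v$c) \<le> cmod (v$k)" for c
    using Max_ge[of "range (\<lambda>c. cmod (v$c))" "cmod (v$c)"] unfolding m_def by simp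
  obtain j where "v$j \<noteq> 0" using v(1) by (auto simp: vec_eq_iff)
  then have "cmod (v$k) > 0" using k[of j] zero_less_norm_iff[of "v$j"] by linarith
  have "cmod e * cmod (v$k) = cmod (\<Sum>c\<in>UNIV. complex_of_real (M$k$c) * v$c)"
    using arg_cong[OF v(2), of "\<lambda>x. x$k"]
    by (simp add: matrix_vector_mult_def cmat_def norm_mult)
  also have "\<dots> \<le> (\<Sum>c\<in>UNIV. \<bar>M$k$c\<bar> * cmod (v$k))"
    by (rule order_trans[OF norm_sum sum_mono]) (simp add: norm_mult k mult_left_mono)
  finally have "cmod e * cmod (v$k) \<le> (\<Sum>c\<in>UNIV. \<bar>M$k$c\<bar>) * cmod (v$k)"
    by (simp add: sum_distrib_right)
  then have "cmod e \<le> (\<Sum>c\<in>UNIV. \<bar>M$k$c\<bar>)"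
    using \<open>cmod (v$k) > 0\<close> by (rule mult_right_le_imp_le)
  also have "\<dots> \<le> (\<Sum>r\<in>UNIV. \<Sum>c\<in>UNIV. \<bar>M$r$c\<bar>)"
    by (rule member_le_sum) (auto intro: sum_nonneg)
  finally show ?thesis .
qed

lemma eigenvalue_norm_le_spectral_radius:
  fixes M :: "real^'n^'n"
  assumes "e \<in> eigenvalues M"
  shows "cmod e \<le> spectral_radius M"
  unfolding spectral_radius_def
  by (rule cSup_upper) (use assms eigenvalue_norm_le_entry_sum in \<open>auto intro!: bdd_aboveI2\<close>)

lemma real_eigenvalue_in_eigenvalues:
  fixes M :: "real^'n^'n"
  assumes "v \<noteq> 0" "M *v v = l *\<^sub>R v"
  shows "complex_of_real l \<in> eigenvalues M"
proof -
  define cv where "cv = (\<chi> i. complex_of_real (v$i))"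
  have "cv \<noteq> 0" using assms(1) unfolding cv_def by (simp add: vec_eq_iff)
  moreover have "cmat M *v cv = complex_of_real l *s cv"
    using assms(2)
    by (simp add: vec_eq_iff matrix_vector_mult_def cmat_def cv_def flip: of_real_mult of_real_sum)
  ultimately show ?thesis unfolding eigenvalues_def by auto
qed

lemma invertible_id_minus_scaleR:
  fixes N :: "real^'n^'n"
  assumes rho: "spectral_radius N < 1" and s: "0 \<le> s" "s \<le> 1"
  shows "invertible (mat 1 - s *\<^sub>R N)"
proof (rule invertible_left_inverse[THEN iffD2], rule matrix_left_invertible_ker[THEN iffD2],
       intro allI impI, rule ccontr)
  fix x assume x: "(mat 1 - s *\<^sub>R N) *v x = 0" "x \<noteq> 0"
  have xe: "x = s *\<^sub>R (N *v x)" using x(1)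
    by (simp add: matrix_vector_mult_diff_rdistrib scaleR_matrix_vector_assoc)
  with x(2) have "s \<noteq> 0" by auto
  from arg_cong[OF xe, of "scaleR (1/s)"] \<open>s \<noteq> 0\<close> have "N *v x = (1/s) *\<^sub>R x" by simp
  from eigenvalue_norm_le_spectral_radius[OF real_eigenvalue_in_eigenvalues[OF x(2) this]]
  have "1/s \<le> spectral_radius N" using s by (simp add: norm_divide)
  moreover have "1 \<le> 1/s" using s \<open>s \<noteq> 0\<close> by simp
  ultimately show False using rho by simp
qed

lemma invertible_id_minus:
  fixes N :: "real^'n^'n"
  assumes "spectral_radius N < 1"
  shows "invertible (mat 1 - N)"
  using invertible_id_minus_scaleR[OF assms, of 1] by simp

lemma continuous_on_det:
  fixes f :: "'a::topological_space \<Rightarrow> real^'n^'n"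
  assumes "\<And>i j. continuous_on S (\<lambda>s. f s $ i $ j)"
  shows "continuous_on S (\<lambda>s. det (f s))"
  unfolding det_def by (intro continuous_intros assms)

lemma continuous_on_resolvent:
  fixes N :: "real^'n^'n"
  assumes rho: "spectral_radius N < 1"
  shows "continuous_on {0..1} (\<lambda>s. matrix_inv (mat 1 - s *\<^sub>R N))"
proof -
  have det_nz: "det (mat 1 - s *\<^sub>R N) \<noteq> 0" if "s \<in> {0..1}" for s
    using invertible_id_minus_scaleR[OF rho] invertible_det_nz that by auto
  have entry: "continuous_on {0..1} (\<lambda>s. matrix_inv (mat 1 - s *\<^sub>R N) $ r $ c)" for r c
  proof (rule continuous_on_eq)
    let ?C = "\<lambda>s. \<chi> i k. if k = r then (if i = c then 1 else 0) else (mat 1 - s *\<^sub>R N)$i$k"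
    have "continuous_on {0..1} (\<lambda>s. ?C s $ i $ k)" for i k
      by (cases "k = r") (simp_all, intro continuous_intros)
    then show "continuous_on {0..1} (\<lambda>s. det (?C s) / det (mat 1 - s *\<^sub>R N))"
      using det_nz by (intro continuous_on_divide continuous_on_det continuous_intros) auto
    show "\<And>s. s \<in> {0..1} \<Longrightarrow> det (?C s) / det (mat 1 - s *\<^sub>R N)
                             = matrix_inv (mat 1 - s *\<^sub>R N) $ r $ c"
      by (rule matrix_inv_entry_cramer[symmetric], rule invertible_id_minus_scaleR[OF rho]) auto
  qed
  have "continuous_on {0..1} (\<lambda>s. \<chi> r c. matrix_inv (mat 1 - s *\<^sub>R N) $ r $ c)"
    by (intro continuous_on_vec_lambda entry)
  then show ?thesis by simp
qed

lemma continuous_on_compact_entries_bounded: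
  fixes f :: "'a::topological_space \<Rightarrow> real^'n^'m"
  assumes "continuous_on S f" "compact S"
  obtains C where "\<And>s r c. s \<in> S \<Longrightarrow> \<bar>f s $ r $ c\<bar> \<le> C"
proof -
  obtain C where C: "\<And>s. s \<in> S \<Longrightarrow> norm (f s) \<le> C"
    using compact_imp_bounded[OF compact_continuous_image[OF assms]] by (auto simp: bounded_iff)
  have "\<bar>f s $ r $ c\<bar> \<le> C" if "s \<in> S" for s r c
    using component_le_norm_cart[where x="f s $ r" and i=c]
      Finite_Cartesian_Product.norm_nth_le[where x="f s" and i=r] C[OF that]
    by linarith
  then show thesis by (rule that)
qed

lemma resolvent_identity:
  fixes N :: "real^'n^'n"
  assumes "invertible (mat 1 - s *\<^sub>R N)" "invertible (mat 1 - t *\<^sub>R N)"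
  shows "matrix_inv (mat 1 - t *\<^sub>R N) = matrix_inv (mat 1 - s *\<^sub>R N)
     + (t - s) *\<^sub>R (matrix_inv (mat 1 - s *\<^sub>R N) ** N ** matrix_inv (mat 1 - t *\<^sub>R N))"
proof -
  let ?Rs = "matrix_inv (mat 1 - s *\<^sub>R N)" and ?Rt = "matrix_inv (mat 1 - t *\<^sub>R N)"
  have "(t - s) *\<^sub>R (?Rs ** N ** ?Rt) = ?Rs ** ((mat 1 - s *\<^sub>R N) - (mat 1 - t *\<^sub>R N)) ** ?Rt"
    by (simp add: algebra_simps matrix_mul_scaleR_left matrix_mul_scaleR_right
        matrix_mul_diff_ldistrib matrix_mul_diff_rdistrib)
  also have "\<dots> = ?Rs ** (mat 1 - s *\<^sub>R N) ** ?Rt - ?Rs ** ((mat 1 - t *\<^sub>R N) ** ?Rt)"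
    by (simp add: matrix_mul_diff_ldistrib matrix_mul_diff_rdistrib matrix_mul_assoc)
  also have "\<dots> = ?Rt - ?Rs"
    using matrix_mul_matrix_inv[OF assms(1)] matrix_mul_matrix_inv[OF assms(2)] by simp
  finally show ?thesis by simp
qed

lemma nonneg_of_eq_nonneg_plus_small_mult:
  fixes Z P Y :: "real^'n^'n"
  assumes Z: "Z = Y + h *\<^sub>R (P ** Z)" and Y: "\<And>r c. 0 \<le> Y$r$c"
    and P: "\<And>r c. 0 \<le> P$r$c" "\<And>r c. P$r$c \<le> k"
    and h: "0 \<le> h" "h * real CARD('n) * k < 1"
  shows "0 \<le> Z$r$c"
proof (rule ccontr)
  assume "\<not> 0 \<le> Z$r$c"
  (* A negative minimal entry m = Z_ab would satisfy m >= h n k m > m. *)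
  define m where "m = Min (range (\<lambda>(r, c). Z$r$c))"
  have "m \<in> range (\<lambda>(r, c). Z$r$c)" unfolding m_def by (rule Min_in) auto
  then obtain a b where ab: "Z$a$b = m" by auto
  have min: "Z$a$b \<le> Z$r$c" for r c
    unfolding ab m_def by (rule Min_le) (auto intro: image_eqI[where x="(r, c)"])
  with \<open>\<not> 0 \<le> Z$r$c\<close> have neg: "Z$a$b < 0" by (meson not_le order_le_less_trans)
  have "P$a$j * Z$j$b \<ge> k * Z$a$b" for j
    using mult_left_mono[OF min P(1)] mult_right_mono_neg[OF P(2) less_imp_le[OF neg]]
    by (meson order_trans)
  then have "h * (\<Sum>j\<in>(UNIV::'n set). k * Z$a$b) \<le> h * (\<Sum>j\<in>UNIV. P$a$j * Z$j$b)"
    by (intro mult_left_mono[OF sum_mono h(1)])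
  also have "\<dots> \<le> Z$a$b"
    using arg_cong[OF Z, of "\<lambda>M. M$a$b"] Y[of a b] by (simp add: matrix_mul_entry)
  finally have "0 \<le> (1 - h * real CARD('n) * k) * Z$a$b" by (simp add: algebra_simps)
  moreover have "(1 - h * real CARD('n) * k) * Z$a$b < 0"
    using h(2) neg by (intro mult_pos_neg) auto
  ultimately show False by simp
qed

lemma inverse_id_minus_nonneg:
  fixes N :: "real^'n^'n"
  assumes nn: "\<And>r c. 0 \<le> N$r$c" and rho: "spectral_radius N < 1"
  shows "0 \<le> matrix_inv (mat 1 - N) $ r $ c"
proof -
  define R where "R s = matrix_inv (mat 1 - s *\<^sub>R N)" for s :: real
  have "continuous_on {0..1} R"
    unfolding R_def by (rule continuous_on_resolvent[OF rho])
  then have "continuous_on {0..1} (\<lambda>s. R s ** N)"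
    unfolding matrix_matrix_mult_def by (intro continuous_intros)
  then obtain k where k: "\<And>s r c. s \<in> {0..1} \<Longrightarrow> \<bar>(R s ** N)$r$c\<bar> \<le> k"
    using continuous_on_compact_entries_bounded[OF _ compact_Icc] by blast
  then have "0 \<le> k" by (meson abs_ge_zero atLeastAtMost_iff order_trans zero_le_one order_refl)
  obtain L :: nat where L: "real CARD('n) * k < L" using reals_Archimedean2 by blast
  moreover have "0 \<le> real CARD('n) * k" using \<open>0 \<le> k\<close> by simp
  ultimately have "0 < L" by simp
  (* Walk from R 0 = I to R 1 along the grid s = i / L; the steps are short enough for the
     resolvent identity to propagate nonnegativity. *)
  have "\<forall>r c. 0 \<le> R (real i / real L) $ r $ c" if "i \<le> L" for i
    using that
  proof (induction i)
    case 0
    have "R 0 = mat 1" unfolding R_def by (simp add: matrix_inv_unique)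
    then show ?case by (simp add: mat_def)
  next
    case (Suc i)
    let ?s = "real i / real L" and ?t = "real (Suc i) / real L"
    have s: "?s \<in> {0..1}" and t: "?t \<in> {0..1}" using Suc.prems \<open>0 < L\<close> by auto
    have IH: "0 \<le> R ?s $ r $ c" for r c using Suc by simp
    have eq: "R ?t = R ?s + (1 / real L) *\<^sub>R (R ?s ** N ** R ?t)"
      using resolvent_identity[OF invertible_id_minus_scaleR[OF rho] invertible_id_minus_scaleR[OF rho],
          of ?s ?t] s t
      unfolding R_def by (simp add: diff_divide_distrib[symmetric])
    have "0 \<le> (R ?s ** N)$r$c" for r c
      unfolding matrix_mul_entry using IH nn by (intro sum_nonneg mult_nonneg_nonneg)
    moreover have "(R ?s ** N)$r$c \<le> k" for r c using k[OF s] abs_le_D1 by blast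
    moreover have "(1 / real L) * real CARD('n) * k < 1" using L \<open>0 < L\<close> by (simp add: field_simps)
    ultimately have "0 \<le> R ?t $ r $ c" for r c
      by (intro nonneg_of_eq_nonneg_plus_small_mult[OF eq IH]) auto
    then show ?case by blast
  qed
  from this[of L] \<open>0 < L\<close> show ?thesis unfolding R_def by simp
qed

section \<open>Comparison of Gramian traces\<close>

lemma mpow_nonneg:
  fixes N :: "real^'n^'n"
  assumes "\<And>r c. 0 \<le> N$r$c"
  shows "0 \<le> mpow N t $ r $ c"
  by (induction t arbitrary: r c) (simp_all add: mat_def matrix_mul_entry assms sum_nonneg)

lemma matrix_mul_abs_le:
  fixes A A' :: "real^'k^'m" and B B' :: "real^'n^'k"
  assumes "\<And>r c. \<bar>A$r$c\<bar> \<le> A'$r$c" "\<And>r c. \<bar>B$r$c\<bar> \<le> B'$r$c"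
  shows "\<bar>(A ** B)$r$c\<bar> \<le> (A' ** B')$r$c"
proof -
  have "\<bar>(A ** B)$r$c\<bar> \<le> (\<Sum>j\<in>UNIV. \<bar>A$r$j * B$j$c\<bar>)"
    unfolding matrix_mul_entry by (rule sum_abs)
  also have "\<dots> \<le> (\<Sum>j\<in>UNIV. A'$r$j * B'$j$c)"
    by (intro sum_mono) (simp add: abs_mult assms mult_mono')
  finally show ?thesis by (simp add: matrix_mul_entry)
qed

lemma mpow_abs_le:
  fixes Z P :: "real^'n^'n"
  assumes "\<And>r c. \<bar>Z$r$c\<bar> \<le> P$r$c"
  shows "\<bar>mpow Z t $ r $ c\<bar> \<le> mpow P t $ r $ c"
  by (induction t arbitrary: r c) (simp_all add: mat_def matrix_mul_abs_le assms)

lemma id_minus_mult_sum_mpow: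
  fixes N :: "real^'n^'n"
  shows "(mat 1 - N) ** (\<Sum>t<T. mpow N t) = mat 1 - mpow N T"
  by (induction T) (simp_all add: matrix_add_ldistrib matrix_mul_diff_rdistrib)

lemma sum_mpow_le_inverse:
  fixes N :: "real^'n^'n"
  assumes nn: "\<And>r c. 0 \<le> N$r$c" and rho: "spectral_radius N < 1"
  shows "(\<Sum>t<T. mpow N t) $ r $ c \<le> matrix_inv (mat 1 - N) $ r $ c"
proof -
  let ?X = "matrix_inv (mat 1 - N)"
  have "(\<Sum>t<T. mpow N t) = ?X ** ((mat 1 - N) ** (\<Sum>t<T. mpow N t))"
    using matrix_mul_matrix_inv(2)[OF invertible_id_minus[OF rho]] by (simp add: matrix_mul_assoc)
  also have "\<dots> = ?X - ?X ** mpow N T"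
    by (simp add: id_minus_mult_sum_mpow matrix_mul_diff_ldistrib)
  finally have "(\<Sum>t<T. mpow N t) $ r $ c = ?X $ r $ c - (?X ** mpow N T) $ r $ c" by simp
  moreover have "0 \<le> (?X ** mpow N T) $ r $ c"
    unfolding matrix_mul_entry
    by (intro sum_nonneg mult_nonneg_nonneg inverse_id_minus_nonneg[OF nn rho] mpow_nonneg nn)
  ultimately show ?thesis by simp
qed

lemma sum_power2_le_power2_sum:
  fixes f :: "'a \<Rightarrow> real"
  assumes "\<And>t. t \<in> S \<Longrightarrow> 0 \<le> f t"
  shows "(\<Sum>t\<in>S. (f t)\<^sup>2) \<le> (\<Sum>t\<in>S. f t)\<^sup>2"
  using assms
proof (induction S rule: infinite_finite_induct)
  case (insert t S)
  have IH: "(\<Sum>s\<in>S. (f s)\<^sup>2) \<le> (\<Sum>s\<in>S. f s)\<^sup>2" using insert by simp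
  have "0 \<le> 2 * f t * (\<Sum>s\<in>S. f s)" using insert.prems by (simp add: sum_nonneg)
  have "(\<Sum>s\<in>insert t S. (f s)\<^sup>2) = (f t)\<^sup>2 + (\<Sum>s\<in>S. (f s)\<^sup>2)"
    using insert(1,2) by simp
  also have "\<dots> \<le> (f t)\<^sup>2 + (\<Sum>s\<in>S. f s)\<^sup>2 + 2 * f t * (\<Sum>s\<in>S. f s)"
    using IH \<open>0 \<le> 2 * f t * (\<Sum>s\<in>S. f s)\<close> by linarith
  also have "\<dots> = (\<Sum>s\<in>insert t S. f s)\<^sup>2" using insert(1,2) by (simp add: power2_sum)
  finally show ?case .
qed simp_all

lemma gramian_eq_sum_mult_transpose:
  "gramian T Z B = (\<Sum>t<T. (mpow Z t ** B) ** transpose (mpow Z t ** B))"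
  unfolding gramian_def by (simp add: matrix_transpose_mul matrix_mul_assoc)

lemma trace_gramian_le_Hmat:
  fixes Z P :: "real^'n^'n" and B :: "real^'m^'n"
  assumes le: "\<And>r c. \<bar>Z$r$c\<bar> \<le> \<bar>P$r$c\<bar>" and rho: "spectral_radius (mabs P) < 1"
  shows "trace (gramian T Z B) \<le> trace (Hmat P B)"
proof -
  let ?Y = "Xmat P" and ?bB = "mabs B" and ?bP = "mabs P"
  have nn: "0 \<le> ?bP$r$c" for r c by (simp add: mabs_def)
  have nnB: "0 \<le> ?bB$r$c" for r c by (simp add: mabs_def)
  have entry: "(\<Sum>t<T. ((mpow Z t ** B)$r$c)\<^sup>2) \<le> ((?Y ** ?bB)$r$c)\<^sup>2" for r c
  proof -
    have abs_le: "\<bar>(mpow Z t ** B)$r$c\<bar> \<le> (mpow ?bP t ** ?bB)$r$c" for t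
      using le by (intro matrix_mul_abs_le mpow_abs_le) (simp_all add: mabs_def)
    have "(\<Sum>t<T. ((mpow Z t ** B)$r$c)\<^sup>2) \<le> (\<Sum>t<T. ((mpow ?bP t ** ?bB)$r$c)\<^sup>2)"
      using abs_le by (intro sum_mono) (metis power2_abs abs_ge_zero power_mono)
    also have "\<dots> \<le> (\<Sum>t<T. (mpow ?bP t ** ?bB)$r$c)\<^sup>2"
      using abs_le by (intro sum_power2_le_power2_sum) (meson abs_ge_zero order_trans)
    also have "(\<Sum>t<T. (mpow ?bP t ** ?bB)$r$c) = ((\<Sum>t<T. mpow ?bP t) ** ?bB)$r$c"
      by (simp add: matrix_mul_entry sum_component sum_distrib_right) (rule sum.swap)
    also have "(((\<Sum>t<T. mpow ?bP t) ** ?bB)$r$c)\<^sup>2 \<le> ((?Y ** ?bB)$r$c)\<^sup>2"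
      unfolding matrix_mul_entry Xmat_def
      by (intro power_mono sum_mono mult_right_mono sum_mpow_le_inverse rho nn nnB sum_nonneg
          mult_nonneg_nonneg) (simp_all add: sum_component sum_nonneg mpow_nonneg nn)
    finally show ?thesis .
  qed
  have "trace (gramian T Z B) = (\<Sum>r\<in>UNIV. \<Sum>c\<in>UNIV. \<Sum>t<T. ((mpow Z t ** B)$r$c)\<^sup>2)"
    unfolding gramian_eq_sum_mult_transpose trace_sum trace_mult_transpose
    by (subst sum.swap, rule sum.cong[OF refl], rule sum.swap)
  also have "\<dots> \<le> (\<Sum>r\<in>UNIV. \<Sum>c\<in>UNIV. ((?Y ** ?bB)$r$c)\<^sup>2)"
    by (intro sum_mono entry)
  also have "\<dots> = trace (Hmat P B)"
    unfolding Hmat_def trace_mult_transpose[symmetric] by (simp add: matrix_transpose_mul matrix_mul_assoc)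
  finally show ?thesis .
qed

section \<open>Determinant and trace of a positive definite matrix\<close>

lemma linear_le_quadratic_imp_zero:
  fixes a d :: real
  assumes "\<And>t. 2 * t * a \<le> t\<^sup>2 * d"
  shows "a = 0"
proof (rule ccontr)
  assume "a \<noteq> 0"
  define e where "e = 1 / (\<bar>d\<bar> + 1)"
  have "e > 0" unfolding e_def by simp
  have "2 * (e * a\<^sup>2) \<le> (e * d) * (e * a\<^sup>2)"
    using assms[of "e * a"] by (simp add: power2_eq_square algebra_simps)
  then have "2 \<le> e * d"
    using \<open>a \<noteq> 0\<close> \<open>e > 0\<close> by (simp add: mult_le_cancel_right)
  moreover have "e * d < 1"
    unfolding e_def by (simp add: field_simps)
  ultimately show False by simp
qed

lemma quadratic_form_maximizer_eigenvector:
  fixes W :: "real^'n^'n"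
  assumes sym: "transpose W = W" and V: "subspace V"
    and inv: "\<And>x. x \<in> V \<Longrightarrow> W *v x \<in> V"
    and u: "u \<in> V" "norm u = 1"
    and max: "\<And>y. y \<in> V \<Longrightarrow> norm y = 1 \<Longrightarrow> y \<bullet> (W *v y) \<le> u \<bullet> (W *v u)"
  shows "W *v u = (u \<bullet> (W *v u)) *\<^sub>R u"
proof -
  define lam where "lam = u \<bullet> (W *v u)"
  have uu: "u \<bullet> u = 1" using u(2) by (simp add: norm_eq_1)
  have maxV: "y \<bullet> (W *v y) \<le> lam * (y \<bullet> y)" if "y \<in> V" for y
  proof (cases "y = 0")
    case False
    have "((1 / norm y) *\<^sub>R y) \<bullet> (W *v ((1 / norm y) *\<^sub>R y)) \<le> lam"
      unfolding lam_def using False by (intro max subspace_scale[OF V that]) simp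
    with False show ?thesis
      by (simp add: matrix_vector_mult_scaleR power2_norm_eq_inner[symmetric] power2_eq_square
          field_simps)
  qed simp
  have perp: "y \<bullet> (W *v u) = 0" if "y \<in> V" "y \<bullet> u = 0" for y
  proof (rule linear_le_quadratic_imp_zero)
    fix t
    have "u + t *\<^sub>R y \<in> V" using V u(1) that(1) by (simp add: subspace_add subspace_scale)
    from maxV[OF this]
    show "2 * t * (y \<bullet> (W *v u)) \<le> t\<^sup>2 * (lam * (y \<bullet> y) - y \<bullet> (W *v y))"
      using uu that(2) symmetric_matrix_inner_commute[OF sym, of u y]
      by (simp add: lam_def matrix_vector_right_distrib inner_add_left inner_add_right
          inner_commute power2_eq_square algebra_simps)
  qed
  define z where "z = W *v u - lam *\<^sub>R u"
  have "z \<in> V" unfolding z_def using V inv u(1) by (simp add: subspace_diff subspace_scale)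
  moreover have "z \<bullet> u = 0"
    unfolding z_def lam_def using uu by (simp add: inner_diff_left inner_commute[of "W *v u" u])
  ultimately have "z \<bullet> z = 0"
    using perp inner_diff_right[of z "W *v u" "lam *\<^sub>R u"] by (simp flip: z_def)
  then show ?thesis unfolding z_def lam_def by simp
qed

lemma exists_unit_eigenvector_orthogonal:
  fixes W :: "real^'n^'n"
  assumes sym: "transpose W = W" and S: "finite S" "card S < CARD('n)"
    and eig: "\<And>s. s \<in> S \<Longrightarrow> \<exists>l. W *v s = l *\<^sub>R s"
  obtains u where "norm u = 1" "\<And>s. s \<in> S \<Longrightarrow> orthogonal s u" "\<exists>l. W *v u = l *\<^sub>R u"
proof -
  define V where "V = {z::real^'n. \<forall>s\<in>S. orthogonal s z}"
  have V: "subspace V" unfolding V_def by (auto simp: subspace_def orthogonal_clauses)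
  have inv: "W *v x \<in> V" if "x \<in> V" for x
    unfolding V_def
  proof (intro CollectI ballI)
    fix s assume "s \<in> S"
    then obtain l where "W *v s = l *\<^sub>R s" using eig by blast
    then show "orthogonal s (W *v x)"
      using that \<open>s \<in> S\<close> symmetric_matrix_inner_commute[OF sym, of s x]
      by (simp add: V_def orthogonal_def)
  qed
  have "dim S < DIM(real^'n)" using real_vector.dim_le_card'[OF S(1)] S(2) by simp
  then obtain x :: "real^'n" where x: "x \<noteq> 0" "\<And>y. y \<in> span S \<Longrightarrow> orthogonal x y"
    using orthogonal_to_subspace_exists by blast
  have "x \<in> V" using x(2) unfolding V_def by (simp add: orthogonal_commute span_base)
  have "closed V"
    unfolding V_def orthogonal_def by (simp add: Collect_ball_eq closed_INT closed_hyperplane)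
  then have "compact (V \<inter> sphere 0 1)" by (simp add: closed_Int_compact)
  moreover have "(1 / norm x) *\<^sub>R x \<in> V \<inter> sphere 0 1"
    using x(1) subspace_scale[OF V \<open>x \<in> V\<close>] by simp
  moreover have "continuous_on (V \<inter> sphere 0 1) (\<lambda>y. y \<bullet> (W *v y))"
    by (intro continuous_intros)
  ultimately obtain u where u: "u \<in> V \<inter> sphere 0 1"
    and max: "\<And>y. y \<in> V \<inter> sphere 0 1 \<Longrightarrow> y \<bullet> (W *v y) \<le> u \<bullet> (W *v u)"
    using continuous_attains_sup[of "V \<inter> sphere 0 1" "\<lambda>y. y \<bullet> (W *v y)"] by blast
  have "W *v u = (u \<bullet> (W *v u)) *\<^sub>R u"
    using u max by (intro quadratic_form_maximizer_eigenvector[OF sym V inv]) auto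
  with u show thesis by (intro that) (auto simp: V_def)
qed

definition orthonormal_eigenset :: "real^'n^'n \<Rightarrow> (real^'n) set \<Rightarrow> bool" where
  "orthonormal_eigenset W S \<longleftrightarrow> finite S \<and> pairwise orthogonal S \<and>
     (\<forall>u\<in>S. norm u = 1 \<and> (\<exists>l. W *v u = l *\<^sub>R u))"

lemma orthonormal_eigenset_exists:
  fixes W :: "real^'n^'n"
  assumes sym: "transpose W = W" and "k \<le> CARD('n)"
  shows "\<exists>S. orthonormal_eigenset W S \<and> card S = k"
  using assms(2)
proof (induction k)
  case 0
  show ?case by (intro exI[of _ "{}"]) (simp add: orthonormal_eigenset_def)
next
  case (Suc k)
  then obtain S where S: "orthonormal_eigenset W S" "card S = k" by auto
  then have "finite S" by (simp add: orthonormal_eigenset_def)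
  obtain u where u: "norm u = 1" "\<And>s. s \<in> S \<Longrightarrow> orthogonal s u" "\<exists>l. W *v u = l *\<^sub>R u"
    using exists_unit_eigenvector_orthogonal[OF sym \<open>finite S\<close>] S Suc.prems
    unfolding orthonormal_eigenset_def by auto
  have "u \<notin> S"
  proof
    assume "u \<in> S"
    with u(2) have "u \<bullet> u = 0" by (simp add: orthogonal_def)
    with u(1) show False by simp
  qed
  then have "orthonormal_eigenset W (insert u S) \<and> card (insert u S) = Suc k"
    using S u \<open>finite S\<close>
    by (auto simp: orthonormal_eigenset_def pairwise_insert orthogonal_commute)
  then show ?case by blast
qed

lemma symmetric_matrix_orthonormal_eigenbasis:
  fixes W :: "real^'n^'n"
  assumes sym: "transpose W = W"
  obtains f :: "'n \<Rightarrow> real^'n" and l :: "'n \<Rightarrow> real"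
  where "\<And>i j. f i \<bullet> f j = (if i = j then 1 else 0)" "\<And>j. W *v f j = l j *\<^sub>R f j"
proof -
  obtain S where S: "orthonormal_eigenset W S" "card S = CARD('n)"
    using orthonormal_eigenset_exists[OF sym order_refl] by blast
  then obtain f :: "'n \<Rightarrow> real^'n" where f: "bij_betw f UNIV S"
    using finite_same_card_bij[of "UNIV :: 'n set" S] by (auto simp: orthonormal_eigenset_def)
  from S obtain l where l: "\<And>u. u \<in> S \<Longrightarrow> W *v u = l u *\<^sub>R u"
    unfolding orthonormal_eigenset_def by metis
  have "f i \<bullet> f j = (if i = j then 1 else 0)" for i j
  proof (cases "i = j")
    case True
    then show ?thesis using S(1) f by (auto simp: orthonormal_eigenset_def bij_betw_def norm_eq_1)
  next
    case False
    then have "f i \<noteq> f j" using f by (auto simp: bij_betw_def inj_on_def)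
    then show ?thesis using S(1) f False
      by (auto simp: orthonormal_eigenset_def bij_betw_def pairwise_def orthogonal_def)
  qed
  moreover have "W *v f j = (l \<circ> f) j *\<^sub>R f j" for j
    using f l by (auto simp: bij_betw_def)
  ultimately show thesis by (rule that)
qed

lemma det_trace_of_orthonormal_eigenbasis:
  fixes W :: "real^'n^'n" and f :: "'n \<Rightarrow> real^'n"
  assumes orth: "\<And>i j. f i \<bullet> f j = (if i = j then 1 else 0)"
    and eig: "\<And>j. W *v f j = l j *\<^sub>R f j"
  shows "det W = (\<Prod>j\<in>UNIV. l j)" "trace W = (\<Sum>j\<in>UNIV. l j)"
proof -
  define Q :: "real^'n^'n" where "Q = (\<chi> i j. f j $ i)"
  define D :: "real^'n^'n" where "D = (\<chi> i j. if i = j then l j else 0)"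
  have "transpose Q ** Q = mat 1"
    using orth by (simp add: vec_eq_iff matrix_mul_entry Q_def transpose_def inner_vec_def mat_def)
  then have QQt: "Q ** transpose Q = mat 1" and detQ: "det Q * det Q = 1"
    using matrix_left_right_inverse det_mul[of "transpose Q" Q] by (auto simp: det_transpose)
  have "W ** Q = Q ** D"
    using eig by (simp add: vec_eq_iff matrix_mul_entry Q_def D_def matrix_vector_mult_def
        if_distrib if_distribR cong: if_cong)
  have W: "W = Q ** D ** transpose Q"
  proof -
    have "W = W ** (Q ** transpose Q)" using QQt by simp
    also have "\<dots> = Q ** D ** transpose Q"
      using \<open>W ** Q = Q ** D\<close> by (simp add: matrix_mul_assoc)
    finally show ?thesis .
  qed
  have "det W = det D * (det Q * det Q)"
    unfolding W by (simp add: det_mul det_transpose)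
  then show "det W = (\<Prod>j\<in>UNIV. l j)"
    using detQ by (simp add: D_def det_diagonal)
  have "trace W = trace (transpose Q ** (Q ** D))"
    unfolding W by (rule trace_mul_sym)
  also have "\<dots> = trace ((transpose Q ** Q) ** D)" by (simp add: matrix_mul_assoc)
  finally show "trace W = (\<Sum>j\<in>UNIV. l j)"
    using \<open>transpose Q ** Q = mat 1\<close> by (simp add: trace_def D_def)
qed

lemma sum_ln_le_ln_mean:
  fixes l :: "'n::finite \<Rightarrow> real"
  assumes "\<And>j. 0 < l j"
  shows "(\<Sum>j\<in>UNIV. ln (l j)) \<le> real CARD('n) * ln ((\<Sum>j\<in>UNIV. l j) / real CARD('n))"
proof -
  have "(\<Sum>j\<in>UNIV. (1 / real CARD('n)) * ln (l j))
      \<le> ln (\<Sum>j\<in>UNIV. (1 / real CARD('n)) *\<^sub>R l j)"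
    using assms by (intro concave_on_sum[OF _ _ ln_concave]) auto
  then show ?thesis
    by (simp add: sum_divide_distrib[symmetric] sum_distrib_left[symmetric] field_simps)
qed

lemma pos_def_ln_det_le:
  fixes W :: "real^'n^'n"
  assumes sym: "transpose W = W" and pd: "\<And>x. x \<noteq> 0 \<Longrightarrow> 0 < x \<bullet> (W *v x)"
  shows "ln (det W) \<le> real CARD('n) * ln (trace W / real CARD('n))"
proof -
  obtain f :: "'n \<Rightarrow> real^'n" and l
    where orth: "\<And>i j. f i \<bullet> f j = (if i = j then 1 else 0)"
    and eig: "\<And>j. W *v f j = l j *\<^sub>R f j"
    using symmetric_matrix_orthonormal_eigenbasis[OF sym] by blast
  have "0 < l j" for j
  proof -
    have "f j \<noteq> 0" using orth[of j j] by auto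
    then show ?thesis using pd[of "f j"] orth[of j j] eig[of j] by simp
  qed
  then show ?thesis
    unfolding det_trace_of_orthonormal_eigenbasis[OF orth eig]
    by (simp add: ln_prod sum_ln_le_ln_mean less_imp_neq[symmetric])
qed

section \<open>Log-determinant of a controllable Gramian\<close>

lemma gramian_symmetric: "transpose (gramian T Z B) = gramian T Z B"
  by (simp add: vec_eq_iff gramian_eq_sum_mult_transpose transpose_def sum_component
      matrix_mul_entry mult.commute)

lemma gramian_pos_def:
  fixes Z :: "real^'n^'n" and B :: "real^'m^'n"
  assumes ctrl: "controllable T Z B" and "x \<noteq> 0"
  shows "0 < x \<bullet> (gramian T Z B *v x)"
proof (rule ccontr)
  assume "\<not> 0 < x \<bullet> (gramian T Z B *v x)"
  then have "(\<Sum>t<T. (norm (transpose (mpow Z t ** B) *v x))\<^sup>2) \<le> 0"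
    unfolding gramian_eq_sum_mult_transpose matrix_vector_mult_sum_left inner_sum_right
      inner_mult_transpose_self by simp
  then have "(\<Sum>t<T. (norm (transpose (mpow Z t ** B) *v x))\<^sup>2) = 0"
    by (simp add: antisym sum_nonneg)
  then have zero: "transpose (mpow Z t ** B) *v x = 0" if "t < T" for t
    using that by (simp add: sum_nonneg_eq_0_iff)
  have orth: "orthogonal x y" if y_col: "y \<in> {column k (mpow Z t ** B) | t k. t < T}" for y
  proof -
    obtain t k where y: "y = column k (mpow Z t ** B)" "t < T" using y_col by blast
    have "y \<bullet> x = (transpose (mpow Z t ** B) *v x) $ k"
      unfolding y by (simp add: matrix_vector_mult_def transpose_def column_def inner_vec_def)
    then show ?thesis using zero[OF y(2)] by (simp add: orthogonal_def inner_commute)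
  qed
  have "x \<in> span {column k (mpow Z t ** B) | t k. t < T}"
    using ctrl by (simp add: controllable_def)
  from orthogonal_to_span[OF this orth] have "orthogonal x x" .
  then show False using \<open>x \<noteq> 0\<close> by (simp add: orthogonal_def)
qed

lemma trace_gramian_pos:
  fixes Z :: "real^'n^'n" and B :: "real^'m^'n"
  assumes "controllable T Z B"
  shows "0 < trace (gramian T Z B)"
proof -
  have "0 < gramian T Z B $ k $ k" for k
  proof -
    have "unitv k \<noteq> (0 :: real^'n)" by (simp add: unitv_def vec_eq_iff)
    from gramian_pos_def[OF assms this] show ?thesis
      by (simp add: unitv_inner_matrix_vector_mult_unitv)
  qed
  then show ?thesis unfolding trace_def by (simp add: sum_pos)
qed

lemma ln_mean_le_sigma_form:
  fixes x n :: real
  assumes x: "0 < x" and n: "1 \<le> n"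
  shows "n * ln (x / n) \<le> sigma x * n * ln (x / n powr (1 / sigma x))"
proof (cases "x \<le> 1")
  case False
  then have "ln (x / n) \<le> 2 * ln (x / n powr (1/2))"
    using x n by (simp add: ln_div ln_powr)
  then show ?thesis using False n by (simp add: sigma_def)
qed (use n in \<open>simp add: sigma_def\<close>)

lemma ln_det_gramian_le:
  fixes Z :: "real^'n^'n" and B :: "real^'m^'n"
  assumes ctrl: "controllable T Z B" and le: "trace (gramian T Z B) \<le> \<tau>"
  shows "ln (det (gramian T Z B))
           \<le> sigma \<tau> * real CARD('n) * ln (\<tau> / real CARD('n) powr (1 / sigma \<tau>))"
proof -
  have pos: "0 < trace (gramian T Z B)" by (rule trace_gramian_pos[OF ctrl])
  have "ln (det (gramian T Z B)) \<le> real CARD('n) * ln (trace (gramian T Z B) / real CARD('n))"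
    by (rule pos_def_ln_det_le[OF gramian_symmetric gramian_pos_def[OF ctrl]])
  also have "\<dots> \<le> real CARD('n) * ln (\<tau> / real CARD('n))"
    using pos le by (simp add: divide_right_mono)
  also have "\<dots> \<le> sigma \<tau> * real CARD('n) * ln (\<tau> / real CARD('n) powr (1 / sigma \<tau>))"
    using pos le by (intro ln_mean_le_sigma_form) auto
  finally show ?thesis .
qed

section \<open>Rank-one perturbation\<close>

lemma sherman_morrison_Eji:
  fixes N X :: "real^'n^'n"
  assumes inv: "(mat 1 - N) ** X = mat 1" and den: "1 - c * X$i$j \<noteq> 0"
  shows "matrix_inv (mat 1 - (N + c *\<^sub>R Eji j i))
           = X + (c / (1 - c * X$i$j)) *\<^sub>R (X ** Eji j i ** X)"
proof (rule matrix_inv_unique)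
  let ?E = "Eji j i :: real^'n^'n" and ?d = "1 - c * X$i$j"
  have left: "(mat 1 - (N + c *\<^sub>R ?E)) ** X = mat 1 - c *\<^sub>R (?E ** X)"
    using inv by (simp add: algebra_simps matrix_mul_diff_rdistrib matrix_mul_add_rdistrib
        matrix_mul_scaleR_left)
  have "(mat 1 - (N + c *\<^sub>R ?E)) ** (X ** ?E ** X) = (mat 1 - c *\<^sub>R (?E ** X)) ** ?E ** X"
    using left by (simp add: matrix_mul_assoc)
  also have "\<dots> = ?d *\<^sub>R (?E ** X)"
    by (simp add: matrix_mul_diff_rdistrib matrix_mul_scaleR_left Eji_mult_Eji algebra_simps
        flip: matrix_mul_assoc) (simp add: matrix_mul_assoc Eji_mult_Eji matrix_mul_scaleR_left)
  finally show "(mat 1 - (N + c *\<^sub>R ?E)) ** (X + (c / ?d) *\<^sub>R (X ** ?E ** X)) = mat 1"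
    using left den by (simp add: matrix_add_ldistrib matrix_mul_scaleR_right)
qed

lemma rank_one_denominator_pos:
  fixes N :: "real^'n^'n"
  assumes nnN: "\<And>r c. 0 \<le> N$r$c" and rhoN: "spectral_radius N < 1" and c: "0 \<le> c"
    and rhoP: "spectral_radius (N + c *\<^sub>R Eji j i) < 1"
  shows "0 < 1 - c * matrix_inv (mat 1 - N) $ i $ j"
proof -
  let ?X = "matrix_inv (mat 1 - N)" and ?P = "N + c *\<^sub>R Eji j i"
  let ?X' = "matrix_inv (mat 1 - ?P)"
  have nnP: "0 \<le> ?P$r$c" for r c using nnN c by (simp add: Eji_def)
  have NX: "(mat 1 - N) ** ?X = mat 1" by (rule matrix_mul_matrix_inv(1)[OF invertible_id_minus[OF rhoN]])
  have "?X = mat 1 + N ** ?X" using NX by (simp add: matrix_mul_diff_rdistrib algebra_simps)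
  from arg_cong[OF this, of "\<lambda>M. M$j$j"] have "?X$j$j = 1 + (N ** ?X)$j$j"
    by (simp add: mat_def)
  moreover have "0 \<le> (N ** ?X)$j$j"
    unfolding matrix_mul_entry by (intro sum_nonneg mult_nonneg_nonneg nnN inverse_id_minus_nonneg rhoN)
  ultimately have "1 \<le> ?X$j$j" by simp
  (* Column j of (I - P) X is (1 - c X_ij) e_j, hence X_jj = X'_jj (1 - c X_ij) with X' >= 0. *)
  have col: "((mat 1 - ?P) ** ?X)$a$j = (if a = j then 1 - c * ?X$i$j else 0)" for a
  proof -
    have "(mat 1 - ?P) ** ?X = mat 1 - c *\<^sub>R (Eji j i ** ?X)"
      using NX by (simp add: algebra_simps matrix_mul_diff_rdistrib matrix_mul_add_rdistrib
          matrix_mul_scaleR_left)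
    then show ?thesis by (simp add: Eji_mult_entry mat_def)
  qed
  have "?X = ?X' ** ((mat 1 - ?P) ** ?X)"
    using matrix_mul_matrix_inv(2)[OF invertible_id_minus[OF rhoP]] by (simp add: matrix_mul_assoc)
  from arg_cong[OF this, of "\<lambda>M. M$j$j"]
  have "?X$j$j = (\<Sum>k\<in>UNIV. ?X'$j$k * (if k = j then 1 - c * ?X$i$j else 0))"
    by (simp only: matrix_mul_entry[of ?X'] col)
  also have "\<dots> = ?X'$j$j * (1 - c * ?X$i$j)"
    by (simp add: if_distrib cong: if_cong)
  finally have "0 < ?X'$j$j * (1 - c * ?X$i$j)" using \<open>1 \<le> ?X$j$j\<close> by simp
  moreover have "0 \<le> ?X'$j$j" by (rule inverse_id_minus_nonneg[OF nnP rhoP])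
  ultimately show ?thesis by (simp add: zero_less_mult_iff)
qed

lemma inner_unit_mult_inner_le:
  fixes u x v :: "real^'n"
  assumes u: "norm u = 1"
  shows "2 * (u \<bullet> v) * (x \<bullet> v) \<le> (u \<bullet> x + norm x) * (v \<bullet> v)"
proof (cases "x = 0")
  case False
  define nx where "nx = norm x"
  let ?y = "nx *\<^sub>R u + x" and ?z = "nx *\<^sub>R u - x"
  have uu: "u \<bullet> u = 1" using u by (simp add: norm_eq_1)
  have xx: "x \<bullet> x = nx\<^sup>2" unfolding nx_def by (simp add: power2_norm_eq_inner)
  (* Polarization, then Cauchy-Schwarz for y, whose squared norm is 2 |x| (|x| + u . x). *)
  have "4 * nx * ((u \<bullet> v) * (x \<bullet> v)) = (?y \<bullet> v)\<^sup>2 - (?z \<bullet> v)\<^sup>2"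
    by (simp add: inner_add_left inner_diff_left power2_eq_square algebra_simps)
  also have "\<dots> \<le> (?y \<bullet> ?y) * (v \<bullet> v)"
    using Cauchy_Schwarz_ineq[of ?y v] zero_le_power2[of "?z \<bullet> v"] by linarith
  also have "?y \<bullet> ?y = 2 * nx * (nx + u \<bullet> x)"
    using uu xx by (simp add: inner_add_left inner_add_right inner_commute power2_eq_square algebra_simps)
  finally have "(2 * nx) * (2 * ((u \<bullet> v) * (x \<bullet> v)))
      \<le> (2 * nx) * ((u \<bullet> x + nx) * (v \<bullet> v))"
    by (simp add: algebra_simps)
  moreover have "0 < 2 * nx" using False unfolding nx_def by simp
  ultimately have "2 * ((u \<bullet> v) * (x \<bullet> v)) \<le> (u \<bullet> x + nx) * (v \<bullet> v)"
    using mult_le_cancel_left_pos by blast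
  then show ?thesis unfolding nx_def by (simp add: mult.assoc)
qed simp

lemma trace_rank_one_update_le:
  fixes M M' :: "real^'k^'n" and u x :: "real^'n"
  assumes col: "\<And>c. column c M' = column c M + (a * (u \<bullet> column c M)) *\<^sub>R x"
    and u: "norm u = 1" and a: "0 \<le> a"
  shows "trace (M' ** transpose M')
           \<le> (1 + a * (u \<bullet> x + norm x)) * trace (M ** transpose M)
              + a\<^sup>2 * (x \<bullet> x) * (\<Sum>c\<in>UNIV. (u \<bullet> column c M)\<^sup>2)"
proof -
  have "column c M' \<bullet> column c M'
      \<le> (1 + a * (u \<bullet> x + norm x)) * (column c M \<bullet> column c M)
         + a\<^sup>2 * (x \<bullet> x) * (u \<bullet> column c M)\<^sup>2"
    for c
  proof -
    let ?v = "column c M"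
    have "column c M' \<bullet> column c M' = ?v \<bullet> ?v + a * (2 * (u \<bullet> ?v) * (x \<bullet> ?v))
        + a\<^sup>2 * (x \<bullet> x) * (u \<bullet> ?v)\<^sup>2"
      unfolding col by (simp add: inner_add_left inner_add_right inner_commute power2_eq_square algebra_simps)
    also have "a * (2 * (u \<bullet> ?v) * (x \<bullet> ?v)) \<le> a * ((u \<bullet> x + norm x) * (?v \<bullet> ?v))"
      using inner_unit_mult_inner_le[OF u] a by (rule mult_left_mono)
    finally show ?thesis by (simp add: algebra_simps)
  qed
  then have "trace (M' ** transpose M')
      \<le> (\<Sum>c\<in>UNIV. (1 + a * (u \<bullet> x + norm x)) * (column c M \<bullet> column c M)
                    + a\<^sup>2 * (x \<bullet> x) * (u \<bullet> column c M)\<^sup>2)"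
    unfolding trace_mult_transpose_columns by (rule sum_mono)
  then show ?thesis by (simp add: trace_mult_transpose_columns sum.distrib sum_distrib_left)
qed

lemma Max_offdiag_ge:
  fixes f :: "'n::finite \<Rightarrow> 'n \<Rightarrow> real"
  assumes "p \<noteq> q"
  shows "f p q \<le> Max {f p q | p q. p \<noteq> q}"
proof (rule Max_ge)
  have "{f p q | p q. p \<noteq> q} \<subseteq> range (case_prod f)" by auto
  then show "finite {f p q | p q. p \<noteq> q}" by (rule finite_subset) simp
qed (use assms in blast)

lemma Max_range_ge:
  fixes g :: "'n::finite \<Rightarrow> real"
  shows "g k \<le> Max {g k | k. True}"
  by (rule Max_ge) (simp_all add: full_SetCompr_eq)

lemma trace_Hmat_rank_one_perturbation_le:
  fixes A :: "real^'n^'n" and B :: "real^'m^'n"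
  assumes hA: "spectral_radius (mabs A) < 1" and hij: "i \<noteq> j"
    and hw: "spectral_radius (mabs A + \<bar>w\<bar> *\<^sub>R Eji j i) < 1"
  shows "trace (Hmat (mabs A + \<bar>w\<bar> *\<^sub>R Eji j i) B)
           \<le> (1 + alpha A w * beta A) * trace (Hmat A B) + (alpha A w)\<^sup>2 * gamma A * gamma_bar A B"
proof -
  let ?E = "Eji j i :: real^'n^'n" and ?P = "mabs A + \<bar>w\<bar> *\<^sub>R Eji j i"
  let ?X = "Xmat A" and ?bB = "mabs B"
  define a where "a = \<bar>w\<bar> / (1 - \<bar>w\<bar> * ?X$i$j)"
  define M where "M = ?X ** ?bB"
  define x where "x = column j ?X"
  have HM: "Hmat A B = M ** transpose M"
    unfolding Hmat_def M_def by (simp add: matrix_transpose_mul matrix_mul_assoc)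
  have nnA: "0 \<le> mabs A $ r $ c" for r c by (simp add: mabs_def)
  have X_nonneg: "0 \<le> ?X $ r $ c" for r c
    unfolding Xmat_def by (rule inverse_id_minus_nonneg[OF nnA hA])
  have den: "0 < 1 - \<bar>w\<bar> * ?X$i$j"
    unfolding Xmat_def by (rule rank_one_denominator_pos[OF nnA hA abs_ge_zero hw])
  then have "0 \<le> a" unfolding a_def by simp
  have "mabs ?P = ?P" by (simp add: vec_eq_iff mabs_def Eji_def)
  then have "Xmat ?P = matrix_inv (mat 1 - ?P)" by (simp add: Xmat_def)
  also have "\<dots> = ?X + a *\<^sub>R (?X ** ?E ** ?X)"
    unfolding a_def Xmat_def
    by (rule sherman_morrison_Eji[OF matrix_mul_matrix_inv(1)[OF invertible_id_minus[OF hA]]])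
      (use den in \<open>simp add: Xmat_def\<close>)
  finally have "Xmat ?P = ?X + a *\<^sub>R (?X ** ?E ** ?X)" .
  then have "Xmat ?P ** ?bB = M + a *\<^sub>R (?X ** (?E ** M))"
    by (simp add: M_def matrix_mul_add_rdistrib matrix_mul_scaleR_left matrix_mul_assoc)
  then have col:
    "column k (Xmat ?P ** ?bB) = column k M + (a * (unitv i \<bullet> column k M)) *\<^sub>R x" for k
    by (simp add: column_def vec_eq_iff unitv_inner x_def matrix_mul_Eji_mult_entry)
  have tr: "trace (Hmat ?P B) \<le> (1 + a * (unitv i \<bullet> x + norm x)) * trace (M ** transpose M)
          + a\<^sup>2 * (x \<bullet> x) * (\<Sum>k\<in>UNIV. (unitv i \<bullet> column k M)\<^sup>2)"
    using trace_rank_one_update_le[OF col norm_unitv \<open>0 \<le> a\<close>]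
    unfolding Hmat_def by (simp add: matrix_transpose_mul matrix_mul_assoc)
  have a_le: "a \<le> alpha A w"
    using Max_offdiag_ge[OF hij, of "alpha_pq A w"]
    unfolding alpha_def alpha_pq_def a_def by (simp add: unitv_inner_matrix_vector_mult_unitv)
  have b_le: "unitv i \<bullet> x + norm x \<le> beta A"
    using Max_offdiag_ge[OF hij, of "\<lambda>p q. unitv p \<bullet> (?X *v unitv q)"]
      Max_range_ge[of "\<lambda>q. norm (?X *v unitv q)" j]
    unfolding beta_def x_def by (simp add: unitv_inner_matrix_vector_mult_unitv matrix_vector_mult_unitv)
  have b_nonneg: "0 \<le> unitv i \<bullet> x + norm x"
    using X_nonneg by (simp add: unitv_inner x_def column_def)
  have g_le: "x \<bullet> x \<le> gamma A"
  proof -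
    have "x \<bullet> x = unitv j \<bullet> ((transpose ?X ** ?X) *v unitv j)"
      unfolding unitv_inner_matrix_vector_mult_unitv x_def
      by (simp add: matrix_mul_entry transpose_def inner_vec_def column_def)
    then show ?thesis
      using Max_range_ge[of "\<lambda>k. unitv k \<bullet> ((transpose ?X ** ?X) *v unitv k)" j]
      unfolding gamma_def by simp
  qed
  have h_le: "(\<Sum>k\<in>UNIV. (unitv i \<bullet> column k M)\<^sup>2) \<le> gamma_bar A B"
  proof -
    have "(\<Sum>k\<in>UNIV. (unitv i \<bullet> column k M)\<^sup>2) = unitv i \<bullet> (Hmat A B *v unitv i)"
      unfolding unitv_inner_matrix_vector_mult_unitv HM
      by (simp add: unitv_inner column_def matrix_mul_entry transpose_def power2_eq_square)
    then show ?thesis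
      using Max_range_ge[of "\<lambda>k. unitv k \<bullet> (Hmat A B *v unitv k)" i]
      unfolding gamma_bar_def by simp
  qed
  have t_nonneg: "0 \<le> trace (M ** transpose M)"
    unfolding trace_mult_transpose_columns by (simp add: sum_nonneg)
  have "(1 + a * (unitv i \<bullet> x + norm x)) * trace (M ** transpose M)
      \<le> (1 + alpha A w * beta A) * trace (M ** transpose M)"
    using a_le b_le b_nonneg \<open>0 \<le> a\<close> t_nonneg
    by (intro mult_right_mono add_left_mono mult_mono) auto
  moreover have "a\<^sup>2 * (x \<bullet> x) * (\<Sum>k\<in>UNIV. (unitv i \<bullet> column k M)\<^sup>2)
      \<le> (alpha A w)\<^sup>2 * gamma A * gamma_bar A B"
    using a_le g_le h_le \<open>0 \<le> a\<close> order_trans[OF inner_ge_zero[of x] g_le]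
    by (intro mult_mono power_mono) (auto intro: sum_nonneg)
  ultimately show ?thesis using tr unfolding HM by linarith
qed

theorem theorem5p3:
  fixes A :: "real^'n^'n" and B :: "real^'m^'n" and T :: nat
    and i j :: 'n and w :: real
  assumes hA: "spectral_radius (mabs A) < 1"
    and hT: "T > 0"
    and hij: "i \<noteq> j"
    and hw: "spectral_radius (mabs A + \<bar>w\<bar> *\<^sub>R Eji j i) < 1"
    and hcA: "controllable T A B"
    and hcAw: "controllable T (A + w *\<^sub>R Eji j i) B"
  shows
    "ln (det (gramian T A B))
       \<le> sigma (trace (gramian T A B)) * real CARD('n)
          * ln (trace (gramian T A B) / real CARD('n) powr (1 / sigma (trace (gramian T A B))))
     \<and> sigma (trace (gramian T A B)) * real CARD('n)
          * ln (trace (gramian T A B) / real CARD('n) powr (1 / sigma (trace (gramian T A B))))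
       \<le> sigma (trace (gramian T A B)) * real CARD('n)
          * ln (trace (Hmat A B) / real CARD('n) powr (1 / sigma (trace (gramian T A B))))
     \<and> (let \<tau> = (1 + alpha A w * beta A) * trace (Hmat A B) + (alpha A w)\<^sup>2 * gamma A * gamma_bar A B
        in ln (det (gramian T (A + w *\<^sub>R Eji j i) B))
             \<le> sigma \<tau> * real CARD('n) * ln (\<tau> / real CARD('n) powr (1 / sigma \<tau>)))"
proof -
  let ?P = "mabs A + \<bar>w\<bar> *\<^sub>R Eji j i" and ?tW = "trace (gramian T A B)"
  define \<tau> where
    "\<tau> = (1 + alpha A w * beta A) * trace (Hmat A B) + (alpha A w)\<^sup>2 * gamma A * gamma_bar A B"
  have "0 < ?tW" by (rule trace_gramian_pos[OF hcA])
  moreover have "?tW \<le> trace (Hmat A B)" by (rule trace_gramian_le_Hmat[OF _ hA]) simp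
  ultimately have "ln (?tW / real CARD('n) powr (1 / sigma ?tW))
                     \<le> ln (trace (Hmat A B) / real CARD('n) powr (1 / sigma ?tW))"
    by (simp add: divide_right_mono)
  then have mono: "sigma ?tW * real CARD('n) * ln (?tW / real CARD('n) powr (1 / sigma ?tW))
      \<le> sigma ?tW * real CARD('n) * ln (trace (Hmat A B) / real CARD('n) powr (1 / sigma ?tW))"
    by (intro mult_left_mono) (simp_all add: sigma_def)
  have "mabs ?P = ?P" by (simp add: vec_eq_iff mabs_def Eji_def)
  moreover have "\<bar>(A + w *\<^sub>R Eji j i)$r$c\<bar> \<le> \<bar>?P$r$c\<bar>" for r c
    by (cases "r = j \<and> c = i") (simp_all add: mabs_def Eji_def abs_triangle_ineq)
  ultimately have "trace (gramian T (A + w *\<^sub>R Eji j i) B) \<le> trace (Hmat ?P B)"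
    using hw by (intro trace_gramian_le_Hmat) simp_all
  also have "\<dots> \<le> \<tau>"
    unfolding \<tau>_def by (rule trace_Hmat_rank_one_perturbation_le[OF hA hij hw])
  finally have "ln (det (gramian T (A + w *\<^sub>R Eji j i) B))
      \<le> sigma \<tau> * real CARD('n) * ln (\<tau> / real CARD('n) powr (1 / sigma \<tau>))"
    by (rule ln_det_gramian_le[OF hcAw])
  then show ?thesis
    unfolding Let_def \<tau>_def[symmetric] by (intro conjI ln_det_gramian_le[OF hcA order_refl] mono)
qed

end
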